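(* For every $n\ge1$ and $t\in(0,1)$, $$n\beta+n(n+\gamma)t-(2n+\alpha+\beta+\gamma)(t-1)r_n+(2n+\alpha+\beta+\gamma)ty_n+(t-1)\sum_{j=0}^{n-1}R_j=0.$$
   Context: Fix $\alpha,\beta,\gamma>0$ and real constants $A,B$ with $A\ge0$, $A+B\ge0$, not both $A$ and $A+B$ equal to $0$. Let $\theta$ be the Heaviside function. For $t\in(0,1)$ put $w(x)=x^{\alpha}(1-x)^{\beta}|x-t|^{\gamma}(A+B\theta(x-t))$ on $[0,1]$. Let $P_n$ be the monic orthogonal polynomials w.r.t. $w$ on $[0,1]$ with $\int_0^1P_mP_nw\,dx=h_n\delta_{mn}$. Define $R_n=\frac{\beta}{h_n}\int_0^1\frac{P_n^2(y)w(y)}{1-y}dy$, and for $n\ge1$, $y_n=\frac{\alpha}{h_{n-1}}\int_0^1\frac{P_nP_{n-1}w}{y}dy$, $r_n=\frac{\beta}{h_{n-1}}\int_0^1\frac{P_nP_{n-1}w}{1-y}dy$. *)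

theory Defs
  imports "HOL-Analysis.Analysis" "HOL-Computational_Algebra.Polynomial"
begin

text \<open>Heaviside function (value at 0 is irrelevant for the integrals).\<close>
definition heaviside :: "real \<Rightarrow> real" where
  "heaviside x = (if x \<ge> 0 then 1 else 0)"

definition wgt :: "real \<Rightarrow> real \<Rightarrow> real \<Rightarrow> real \<Rightarrow> real \<Rightarrow> real \<Rightarrow> real \<Rightarrow> real" where
  "wgt \<alpha> \<beta> \<gamma> A B t x =
     x powr \<alpha> * (1 - x) powr \<beta> * \<bar>x - t\<bar> powr \<gamma> * (A + B * heaviside (x - t))"

definition monic_OPS :: "(real \<Rightarrow> real) \<Rightarrow> (nat \<Rightarrow> real poly) \<Rightarrow> bool" where
  "monic_OPS w P \<longleftrightarrow>
     (\<forall>n. degree (P n) = n \<and> lead_coeff (P n) = 1) \<and>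
     (\<forall>m n. m \<noteq> n \<longrightarrow> integral {0..1} (\<lambda>x. poly (P m) x * poly (P n) x * w x) = 0)"

definition hn :: "(real \<Rightarrow> real) \<Rightarrow> (nat \<Rightarrow> real poly) \<Rightarrow> nat \<Rightarrow> real" where
  "hn w P n = integral {0..1} (\<lambda>x. (poly (P n) x)^2 * w x)"

definition Rn :: "real \<Rightarrow> (real \<Rightarrow> real) \<Rightarrow> (nat \<Rightarrow> real poly) \<Rightarrow> nat \<Rightarrow> real" where
  "Rn \<beta> w P n = \<beta> / hn w P n * integral {0..1} (\<lambda>y. (poly (P n) y)^2 * w y / (1 - y))"

definition yn :: "real \<Rightarrow> (real \<Rightarrow> real) \<Rightarrow> (nat \<Rightarrow> real poly) \<Rightarrow> nat \<Rightarrow> real" where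
  "yn \<alpha> w P n = \<alpha> / hn w P (n - 1) *
     integral {0..1} (\<lambda>y. poly (P n) y * poly (P (n - 1)) y * w y / y)"

definition rn :: "real \<Rightarrow> (real \<Rightarrow> real) \<Rightarrow> (nat \<Rightarrow> real poly) \<Rightarrow> nat \<Rightarrow> real" where
  "rn \<beta> w P n = \<beta> / hn w P (n - 1) *
     integral {0..1} (\<lambda>y. poly (P n) y * poly (P (n - 1)) y * w y / (1 - y))"

end

theory Submission
  imports Defs
begin

text \<open>Integrating \<open>((x - t) g(x) w(x))'\<close> over \<open>[0, 1]\<close>, where the boundary terms vanish, gives
  for every polynomial \<open>g\<close>
    \<open>\<integral> ((x - t) g)' w + (\<alpha> + \<beta> + \<gamma>) \<integral> g w = \<alpha> t \<integral> g w / x + \<beta> (1 - t) \<integral> g w / (1 - x)\<close>,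
  because \<open>(x - t) w'/w = \<alpha> + \<beta> + \<gamma> - \<alpha> t / x - \<beta> (1 - t) / (1 - x)\<close>.
  Let \<open>p(n)\<close> be the coefficient of \<open>x^(n-1)\<close> in \<open>P n\<close>. For \<open>g = P n * P (n-1)\<close> orthogonality turns
  the left-hand side into \<open>(- p(n) - n t) h (n-1)\<close>, so \<open>(1 - t) r n + t y n = - p(n) - n t\<close>.
  For \<open>g = x * P j ^ 2\<close> it expresses \<open>(1 - t) R j\<close> as a difference of consecutive terms in \<open>p\<close>
  plus a term polynomial in \<open>j\<close>; summing over \<open>j < n\<close> telescopes to an expression in \<open>p(n)\<close>.
  Eliminating \<open>p(n)\<close> between the two identities yields the theorem.\<close>

lemma integrable_on_01_if_Beta_dominated:
  fixes f :: "real \<Rightarrow> real"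
  assumes "a > 0" "b > 0" "continuous_on {0<..<1} f"
    and "\<And>x. x \<in> {0<..<1} \<Longrightarrow> \<bar>f x\<bar> \<le> C * (x powr (a - 1) * (1 - x) powr (b - 1))"
  shows "f integrable_on {0..1}"
proof -
  have "f integrable_on {0<..<1}"
  proof (rule measurable_bounded_by_integrable_imp_integrable_real)
    show "f \<in> borel_measurable (lebesgue_on {0<..<1})"
      using assms(3) by (rule continuous_imp_measurable_on_sets_lebesgue) auto
    show "(\<lambda>x. C * (x powr (a - 1) * (1 - x) powr (b - 1))) integrable_on {0<..<1}"
      using integrable_on_cmult_left[OF integrable_Beta'[OF assms(1,2)], of C]
      by (simp add: integrable_on_open_interval_real)
  qed (use assms(4) in auto)
  then show ?thesis by (simp add: integrable_on_open_interval_real)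
qed

definition wint :: "(real \<Rightarrow> real) \<Rightarrow> real poly \<Rightarrow> real" where
  "wint w q = integral {0..1} (\<lambda>x. poly q x * w x)"

lemma integrable_poly_mult_weight:
  fixes w :: "real \<Rightarrow> real"
  assumes "continuous_on {0..1} w"
  shows "(\<lambda>x. poly q x * w x) integrable_on {0..1}"
  by (intro integrable_continuous_real continuous_intros assms)

lemma hn_eq_wint: "hn w P n = wint w (P n * P n)"
  by (simp add: hn_def wint_def power2_eq_square)

lemma wint_square_pos:
  fixes w :: "real \<Rightarrow> real"
  assumes cont: "continuous_on {0..1} w" and nonneg: "\<And>x. x \<in> {0..1} \<Longrightarrow> 0 \<le> w x"
    and ab: "0 \<le> a" "a < b" "b \<le> 1" and pos: "\<And>x. x \<in> {a<..<b} \<Longrightarrow> 0 < w x"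
    and "q \<noteq> 0"
  shows "wint w (q * q) > 0"
proof -
  define f where "f x = poly (q * q) x * w x" for x
  have f_cont: "continuous_on (cbox 0 1) f"
    unfolding f_def cbox_interval by (intro continuous_intros cont)
  have f_nonneg: "0 \<le> f x" if "x \<in> {0..1}" for x
    using nonneg[OF that] by (simp add: f_def)
  have "finite {x. poly q x = 0}" using \<open>q \<noteq> 0\<close> by (rule poly_roots_finite)
  then have "infinite ({a<..<b} - {x. poly q x = 0})"
    using ab by (intro Diff_infinite_finite) auto
  then obtain x0 where x0: "x0 \<in> {a<..<b}" "poly q x0 \<noteq> 0"
    using infinite_imp_nonempty by blast
  have "f x0 > 0" using x0 pos[OF x0(1)] by (auto simp: f_def zero_less_mult_iff linorder_neq_iff)
  have "wint w (q * q) \<ge> 0"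
    unfolding wint_def using f_nonneg
    by (intro integral_nonneg integrable_poly_mult_weight cont) (simp add: f_def)
  moreover have "wint w (q * q) \<noteq> 0"
  proof
    assume "wint w (q * q) = 0"
    then have "(f has_integral 0) (cbox 0 1)"
      using integrable_poly_mult_weight[OF cont, of "q * q"]
      unfolding wint_def f_def cbox_interval by (metis integrable_integral)
    then have "f x0 = 0"
      using f_nonneg x0 ab
      by (intro has_integral_0_cbox_imp_0[OF f_cont]) (auto simp: cbox_interval box_real)
    with \<open>f x0 > 0\<close> show False by simp
  qed
  ultimately show ?thesis by simp
qed

lemma pderiv_linear_mult_mult:
  fixes l a b :: "real poly"
  assumes "pderiv l = 1"
  shows "pderiv (l * (a * b)) = (a + l * pderiv a) * b + (l * pderiv b) * a"
  using assms by (simp add: pderiv_mult algebra_simps)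

lemma degree_linear_mult_le:
  fixes p :: "real poly"
  shows "degree p \<le> k \<Longrightarrow> degree ([:a, 1:] * p) \<le> Suc k"
  using degree_mult_le[of "[:a, 1:]" p] by simp

lemma coeff_linear_mult_Suc:
  fixes p :: "real poly"
  shows "coeff ([:a, 1:] * p) (Suc i) = a * coeff p (Suc i) + coeff p i"
  by (simp add: mult_pCons_left)

locale monic_orthogonal_family =
  fixes w :: "real \<Rightarrow> real" and P :: "nat \<Rightarrow> real poly"
  assumes continuous_weight: "continuous_on {0..1} w"
    and monic_ops: "monic_OPS w P"
begin

lemma wint_add: "wint w (p + q) = wint w p + wint w q"
  unfolding wint_def
  by (simp add: distrib_right integral_add integrable_poly_mult_weight continuous_weight)

lemma wint_smult: "wint w (smult c p) = c * wint w p"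
  by (simp add: wint_def mult.assoc)

lemma degree_P: "degree (P n) = n"
  using monic_ops by (simp add: monic_OPS_def)

lemma coeff_P_self: "coeff (P n) n = 1"
  using monic_ops degree_P[of n] unfolding monic_OPS_def by metis

lemma coeff_P_eq_0: "n < i \<Longrightarrow> coeff (P n) i = 0"
  by (simp add: coeff_eq_0 degree_P)

lemma wint_P_mult_P: "m \<noteq> n \<Longrightarrow> wint w (P m * P n) = 0"
  using monic_ops by (simp add: monic_OPS_def wint_def)

text \<open>The value \<open>0\<close> at \<open>n = 0\<close> is what makes the telescoping sum in \<open>sum_Rn\<close> start from zero.\<close>
definition subleading :: "nat \<Rightarrow> real" where
  "subleading n = (if n = 0 then 0 else coeff (P n) (n - 1))"

lemma coeff_P_Suc: "coeff (P (Suc n)) n = subleading (Suc n)"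
  by (simp add: subleading_def)

lemma wint_mult_P_eq_0_if_coeffs_vanish:
  assumes "\<And>i. k \<le> i \<Longrightarrow> coeff q i = 0" and "k \<le> n"
  shows "wint w (q * P n) = 0"
  using assms
proof (induction k arbitrary: q)
  case 0
  then have "q = 0" by (simp add: poly_eq_iff)
  then show ?case by (simp add: wint_def)
next
  case (Suc k)
  define r where "r = q - smult (coeff q k) (P k)"
  have "coeff r i = 0" if "k \<le> i" for i
    using that Suc.prems(1)[of i] coeff_P_self[of k] coeff_P_eq_0[of k i]
    by (cases "i = k") (auto simp: r_def)
  then have "wint w (r * P n) = 0" using Suc by simp
  moreover have "q * P n = smult (coeff q k) (P k * P n) + r * P n"
    by (simp add: r_def algebra_simps)
  ultimately show ?case
    using wint_P_mult_P[of k n] Suc.prems(2) by (simp add: wint_add wint_smult)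
qed

lemma wint_mult_P_eq_0: "degree q < n \<Longrightarrow> wint w (q * P n) = 0"
  by (rule wint_mult_P_eq_0_if_coeffs_vanish[of n]) (auto simp: coeff_eq_0)

lemma wint_mult_P:
  assumes "degree q \<le> n"
  shows "wint w (q * P n) = coeff q n * hn w P n"
proof -
  define r where "r = q - smult (coeff q n) (P n)"
  have "coeff r i = 0" if "n \<le> i" for i
    using that assms coeff_P_self[of n] coeff_P_eq_0[of n i]
    by (cases "i = n") (auto simp: r_def coeff_eq_0)
  then have "wint w (r * P n) = 0" by (intro wint_mult_P_eq_0_if_coeffs_vanish[of n]) auto
  moreover have "q * P n = smult (coeff q n) (P n * P n) + r * P n"
    by (simp add: r_def algebra_simps)
  ultimately show ?thesis by (simp add: wint_add wint_smult hn_eq_wint)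
qed

lemma wint_mult_P_degree_Suc:
  assumes "degree q \<le> Suc n"
  shows "wint w (q * P n) = (coeff q n - subleading (Suc n) * coeff q (Suc n)) * hn w P n"
proof -
  define r where "r = q - smult (coeff q (Suc n)) (P (Suc n))"
  have "degree r \<le> n"
  proof (rule degree_le, intro allI impI)
    fix i assume "n < i"
    then show "coeff r i = 0"
      using assms coeff_P_self[of "Suc n"] coeff_P_eq_0[of "Suc n" i]
      by (cases "i = Suc n") (auto simp: r_def coeff_eq_0)
  qed
  then have "wint w (r * P n) = coeff r n * hn w P n" by (rule wint_mult_P)
  moreover have "q * P n = smult (coeff q (Suc n)) (P (Suc n) * P n) + r * P n"
    by (simp add: r_def algebra_simps)
  moreover have "coeff r n = coeff q n - subleading (Suc n) * coeff q (Suc n)"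
    by (simp add: r_def coeff_P_Suc)
  ultimately show ?thesis
    using wint_P_mult_P[of "Suc n" n] by (simp add: wint_add wint_smult)
qed

lemma wint_pderiv_linear_mult_P_Suc_P:
  "wint w (pderiv ([:-c, 1:] * (P (Suc m) * P m))) = (- subleading (Suc m) - c * real (Suc m)) * hn w P m"
proof -
  define qa where "qa = P (Suc m) + [:-c, 1:] * pderiv (P (Suc m))"
  define qb where "qb = [:-c, 1:] * pderiv (P m)"
  have pderiv_eq: "pderiv ([:-c, 1:] * (P (Suc m) * P m)) = qa * P m + qb * P (Suc m)"
    unfolding qa_def qb_def by (rule pderiv_linear_mult_mult) (simp add: pderiv_pCons)
  have "degree qb \<le> m"
  proof (cases m)
    case (Suc k)
    then show ?thesis
      unfolding qb_def Suc by (intro degree_linear_mult_le) (simp add: degree_pderiv degree_P)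
  next
    case 0
    then have "pderiv (P m) = 0" by (simp add: pderiv_eq_0_iff degree_P)
    then show ?thesis by (simp add: qb_def)
  qed
  then have qb_orth: "wint w (qb * P (Suc m)) = 0" by (intro wint_mult_P_eq_0) simp
  have "degree qa \<le> Suc m"
    unfolding qa_def
    by (intro degree_add_le degree_linear_mult_le) (simp_all add: degree_P degree_pderiv)
  then have "wint w (qa * P m) = (coeff qa m - subleading (Suc m) * coeff qa (Suc m)) * hn w P m"
    by (rule wint_mult_P_degree_Suc)
  moreover have "coeff qa (Suc m) = real m + 2"
    by (simp add: qa_def coeff_linear_mult_Suc coeff_pderiv coeff_P_self coeff_P_eq_0)
  moreover have "coeff qa m = real (Suc m) * subleading (Suc m) - c * real (Suc m)"
    by (cases m) (simp_all add: qa_def coeff_linear_mult_Suc coeff_pderiv coeff_P_self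
        coeff_P_Suc[symmetric] algebra_simps)
  ultimately show ?thesis
    unfolding pderiv_eq wint_add qb_orth by (simp add: algebra_simps)
qed

lemma wint_x_mult_P_P: "wint w ([:0, 1:] * P j * P j) = (subleading j - subleading (Suc j)) * hn w P j"
proof -
  have "degree ([:0, 1:] * P j) \<le> Suc j" by (simp add: degree_P)
  moreover have "coeff ([:0, 1:] * P j) j = subleading j"
    by (cases j) (simp_all add: subleading_def)
  ultimately show ?thesis
    using wint_mult_P_degree_Suc[of "[:0, 1:] * P j" j] by (simp add: coeff_P_self algebra_simps)
qed

lemma wint_pderiv_linear_mult_x_P_P:
  "wint w (pderiv ([:-c, 1:] * ([:0, 1:] * P j * P j)))
     = (2 * real j * subleading j - c * (2 * real j + 1) - (2 * real j + 2) * subleading (Suc j))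
       * hn w P j"
proof -
  define s where "s = P j + [:0, 1:] * pderiv (P j) + [:0, 1:] * pderiv (P j)"
  define q where "q = [:0, 1:] * P j + [:-c, 1:] * s"
  have "pderiv [:-c, 1:] = 1" by (simp add: pderiv_pCons)
  moreover have "pderiv ([:0, 1:] * P j) = P j + [:0, 1:] * pderiv (P j)"
    by (simp add: pderiv_mult pderiv_pCons)
  ultimately have pderiv_eq: "pderiv ([:-c, 1:] * ([:0, 1:] * P j * P j)) = q * P j"
    unfolding q_def s_def by (simp only: pderiv_linear_mult_mult) (simp only: ring_distribs mult_ac add_ac)
  have "degree s \<le> j"
    unfolding s_def by (intro degree_add_le) (simp_all add: degree_P degree_pderiv pderiv_eq_0_iff)
  then have "degree ([:-c, 1:] * s) \<le> Suc j" by (rule degree_linear_mult_le)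
  then have "degree q \<le> Suc j"
    unfolding q_def by (intro degree_add_le) (simp_all add: degree_P)
  then have "wint w (q * P j) = (coeff q j - subleading (Suc j) * coeff q (Suc j)) * hn w P j"
    by (rule wint_mult_P_degree_Suc)
  moreover have "coeff q (Suc j) = 2 * real j + 2"
    by (cases j) (simp_all add: q_def s_def numeral_mult_conv_smult coeff_linear_mult_Suc coeff_pderiv
        coeff_P_self coeff_P_eq_0)
  moreover have "coeff q j = 2 * real j * subleading j - c * (2 * real j + 1)"
    by (cases j) (auto simp: q_def s_def numeral_mult_conv_smult coeff_linear_mult_Suc coeff_pderiv
        coeff_P_self subleading_def coeff_pCons algebra_simps split: nat.split)
  ultimately show ?thesis
    unfolding pderiv_eq by (simp add: algebra_simps)
qed

end

lemma has_real_derivative_powr_const: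
  assumes "(f has_real_derivative m) (at x)" "f x > 0"
  shows "((\<lambda>y. f y powr c) has_real_derivative f x powr c * (m * c / f x)) (at x)"
  using DERIV_powr[OF assms DERIV_const] by simp

lemma has_real_derivative_powr_product:
  assumes "0 < x" "x < 1" "0 < s * (x - t)"
  shows "((\<lambda>y. c * (y powr a * (1 - y) powr b * (s * (y - t)) powr g)) has_real_derivative
      c * (x powr a * (1 - x) powr b * (s * (x - t)) powr g) * (a / x - b / (1 - x) + g / (x - t))) (at x)"
proof -
  have d1: "((\<lambda>y. y powr a) has_real_derivative x powr a * (1 * a / x)) (at x)"
    using assms by (intro has_real_derivative_powr_const) (auto intro!: derivative_eq_intros)
  have d2: "((\<lambda>y. (1 - y) powr b) has_real_derivative (1 - x) powr b * (-1 * b / (1 - x))) (at x)"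
    using assms by (intro has_real_derivative_powr_const) (auto intro!: derivative_eq_intros)
  have "s \<noteq> 0"
    using assms by auto
  have "((\<lambda>y. (s * (y - t)) powr g) has_real_derivative
      (s * (x - t)) powr g * (s * g / (s * (x - t)))) (at x)"
    using assms by (intro has_real_derivative_powr_const) (auto intro!: derivative_eq_intros)
  then have d3: "((\<lambda>y. (s * (y - t)) powr g) has_real_derivative (s * (x - t)) powr g * (g / (x - t))) (at x)"
    using \<open>s \<noteq> 0\<close> by simp
  show ?thesis
    by (intro DERIV_cong[OF DERIV_cmult[OF DERIV_mult[OF DERIV_mult[OF d1 d2] d3]]])
      (simp add: algebra_simps)
qed

locale jacobi_heaviside_weight =
  fixes \<alpha> \<beta> \<gamma> A B t :: real
  assumes \<alpha>_pos: "\<alpha> > 0" and \<beta>_pos: "\<beta> > 0" and \<gamma>_pos: "\<gamma> > 0"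
    and t_pos: "0 < t" and t_less_1: "t < 1"
begin

abbreviation w :: "real \<Rightarrow> real" where
  "w \<equiv> wgt \<alpha> \<beta> \<gamma> A B t"

text \<open>At \<open>x = t\<close> both sides vanish since \<open>\<gamma> > 0\<close>; this removes the jump of the Heaviside factor.\<close>
lemma wgt_eq_max:
  "w x = x powr \<alpha> * (1 - x) powr \<beta> * (A * \<bar>x - t\<bar> powr \<gamma> + B * max (x - t) 0 powr \<gamma>)"
  using \<gamma>_pos by (cases "x \<ge> t") (simp_all add: wgt_def heaviside_def algebra_simps max_def)

lemma continuous_on_wgt: "continuous_on {0..1} w"
proof -
  have "continuous_on {0..1} (\<lambda>x. x powr \<alpha> * (1 - x) powr \<beta> *
      (A * \<bar>x - t\<bar> powr \<gamma> + B * max (x - t) 0 powr \<gamma>))"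
    using \<alpha>_pos \<beta>_pos \<gamma>_pos by (intro continuous_intros continuous_on_powr') auto
  then show ?thesis by (simp add: wgt_eq_max)
qed

lemma wgt_0: "w 0 = 0"
  using \<alpha>_pos by (simp add: wgt_def)

lemma wgt_1: "w 1 = 0"
  using \<beta>_pos by (simp add: wgt_def)

lemma abs_wgt_le:
  assumes "x \<in> {0<..<1}"
  shows "\<bar>w x\<bar> \<le> (\<bar>A\<bar> + \<bar>B\<bar>) * x * (1 - x) * (x powr (\<alpha> - 1) * (1 - x) powr (\<beta> - 1))"
proof -
  have "\<bar>x - t\<bar> powr \<gamma> \<le> 1"
    using assms t_pos t_less_1 \<gamma>_pos by (intro powr_le1) auto
  moreover have "\<bar>A + B * heaviside (x - t)\<bar> \<le> \<bar>A\<bar> + \<bar>B\<bar>"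
    by (simp add: heaviside_def abs_triangle_ineq)
  ultimately have "\<bar>x - t\<bar> powr \<gamma> * \<bar>A + B * heaviside (x - t)\<bar> \<le> \<bar>A\<bar> + \<bar>B\<bar>"
    by (metis abs_ge_zero mult_mono' mult_1 powr_ge_zero)
  moreover have "x powr \<alpha> * (1 - x) powr \<beta> = x * (1 - x) * (x powr (\<alpha> - 1) * (1 - x) powr (\<beta> - 1))"
    using assms by (simp add: powr_diff)
  ultimately show ?thesis
    using assms by (simp add: wgt_def abs_mult mult_left_mono mult_ac)
qed

lemma has_real_derivative_wgt:
  assumes "0 < x" "x < 1" "x \<noteq> t"
  shows "(w has_real_derivative w x * (\<alpha> / x - \<beta> / (1 - x) + \<gamma> / (x - t))) (at x)"
proof (cases "x < t")
  case True
  have w_eq: "w y = A * (y powr \<alpha> * (1 - y) powr \<beta> * (t - y) powr \<gamma>)" if "y \<in> {0<..<t}" for y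
    using that by (simp add: wgt_def heaviside_def)
  have "((\<lambda>y. A * (y powr \<alpha> * (1 - y) powr \<beta> * (t - y) powr \<gamma>)) has_real_derivative
      w x * (\<alpha> / x - \<beta> / (1 - x) + \<gamma> / (x - t))) (at x)"
    using has_real_derivative_powr_product[of x "-1" t A \<alpha> \<beta> \<gamma>] assms True w_eq[of x] by simp
  then show ?thesis
    by (rule has_field_derivative_transform_within_open[where S = "{0<..<t}"])
      (use assms True w_eq in auto)
next
  case False
  have w_eq: "w y = (A + B) * (y powr \<alpha> * (1 - y) powr \<beta> * (y - t) powr \<gamma>)" if "y \<in> {t<..<1}" for y
    using that by (simp add: wgt_def heaviside_def)
  have "((\<lambda>y. (A + B) * (y powr \<alpha> * (1 - y) powr \<beta> * (y - t) powr \<gamma>)) has_real_derivative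
      w x * (\<alpha> / x - \<beta> / (1 - x) + \<gamma> / (x - t))) (at x)"
    using has_real_derivative_powr_product[of x 1 t "A + B" \<alpha> \<beta> \<gamma>] assms False w_eq[of x] by simp
  then show ?thesis
    by (rule has_field_derivative_transform_within_open[where S = "{t<..<1}"])
      (use assms False w_eq in auto)
qed

lemma integrable_poly_wgt_div:
  "(\<lambda>x. poly q x * w x / x) integrable_on {0..1}"
  "(\<lambda>x. poly q x * w x / (1 - x)) integrable_on {0..1}"
proof -
  have "bounded (poly q ` {0..1})"
    by (intro compact_imp_bounded compact_continuous_image) (auto intro: continuous_intros)
  then obtain M where M: "\<forall>x \<in> {0..1}. \<bar>poly q x\<bar> \<le> M"
    by (auto simp: bounded_real)
  define C where "C = M * (\<bar>A\<bar> + \<bar>B\<bar>)"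
  have bound: "\<bar>poly q x * w x / d\<bar> \<le> C * (x powr (\<alpha> - 1) * (1 - x) powr (\<beta> - 1))"
    if x: "x \<in> {0<..<1}" and d: "0 < d" "x * (1 - x) \<le> d" for x d
  proof -
    define \<Phi> where "\<Phi> = (\<bar>A\<bar> + \<bar>B\<bar>) * (x powr (\<alpha> - 1) * (1 - x) powr (\<beta> - 1))"
    have "\<Phi> \<ge> 0" by (simp add: \<Phi>_def)
    have "\<bar>poly q x * w x / d\<bar> = \<bar>poly q x\<bar> * \<bar>w x\<bar> / d"
      using d by (simp add: abs_mult)
    also have "\<dots> \<le> M * (x * (1 - x) * \<Phi>) / d"
      using abs_wgt_le[OF x] M[rule_format, of x] x d by (intro divide_right_mono mult_mono) (auto simp: \<Phi>_def mult_ac)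
    also have "\<dots> \<le> M * (d * \<Phi>) / d"
      using d \<open>\<Phi> \<ge> 0\<close> M[rule_format, of x] x
      by (intro divide_right_mono mult_left_mono mult_right_mono) auto
    also have "\<dots> = M * \<Phi>"
      using d by simp
    finally show ?thesis by (simp add: C_def \<Phi>_def mult_ac)
  qed
  show "(\<lambda>x. poly q x * w x / x) integrable_on {0..1}"
  proof (rule integrable_on_01_if_Beta_dominated[OF \<alpha>_pos \<beta>_pos])
    show "continuous_on {0<..<1} (\<lambda>x. poly q x * w x / x)"
      by (intro continuous_intros continuous_on_subset[OF continuous_on_wgt]) auto
    show "\<bar>poly q x * w x / x\<bar> \<le> C * (x powr (\<alpha> - 1) * (1 - x) powr (\<beta> - 1))"
      if "x \<in> {0<..<1}" for x
      using that by (intro bound) (auto intro: mult_right_le_one_le)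
  qed
  show "(\<lambda>x. poly q x * w x / (1 - x)) integrable_on {0..1}"
  proof (rule integrable_on_01_if_Beta_dominated[OF \<alpha>_pos \<beta>_pos])
    show "continuous_on {0<..<1} (\<lambda>x. poly q x * w x / (1 - x))"
      by (intro continuous_intros continuous_on_subset[OF continuous_on_wgt]) auto
    show "\<bar>poly q x * w x / (1 - x)\<bar> \<le> C * (x powr (\<alpha> - 1) * (1 - x) powr (\<beta> - 1))"
      if "x \<in> {0<..<1}" for x
      using that by (intro bound) (auto intro: mult_left_le_one_le)
  qed
qed

lemma x_minus_t_mult_log_deriv:
  assumes "x \<noteq> 0" "x \<noteq> 1" "x \<noteq> t"
  shows "(x - t) * (\<alpha> / x - \<beta> / (1 - x) + \<gamma> / (x - t))
    = \<alpha> + \<beta> + \<gamma> - \<alpha> * t / x - \<beta> * (1 - t) / (1 - x)"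
proof -
  have "1 - x \<noteq> 0" "x - t \<noteq> 0" using assms by auto
  then have "(x - t) * (\<alpha> / x) = \<alpha> - \<alpha> * t / x"
    "(x - t) * (\<beta> / (1 - x)) = \<beta> * (1 - t) / (1 - x) - \<beta>"
    "(x - t) * (\<gamma> / (x - t)) = \<gamma>"
    using assms by (simp_all add: field_simps)
  then show ?thesis by (simp add: distrib_left right_diff_distrib)
qed

lemma wint_pderiv_linear_mult:
  "wint w (pderiv ([:-t, 1:] * g)) + (\<alpha> + \<beta> + \<gamma>) * wint w g
    = \<alpha> * t * integral {0..1} (\<lambda>x. poly g x * w x / x)
      + \<beta> * (1 - t) * integral {0..1} (\<lambda>x. poly g x * w x / (1 - x))"
proof -
  define G where "G x = poly (pderiv ([:-t, 1:] * g)) x * w x + (\<alpha> + \<beta> + \<gamma>) * (poly g x * w x)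
    - \<alpha> * t * (poly g x * w x / x) - \<beta> * (1 - t) * (poly g x * w x / (1 - x))" for x
  have "(G has_integral (poly ([:-t, 1:] * g) 1 * w 1 - poly ([:-t, 1:] * g) 0 * w 0)) {0..1}"
  proof (rule fundamental_theorem_of_calculus_strong[where S = "{0, t, 1}"])
    show "continuous_on {0..1} (\<lambda>x. poly ([:-t, 1:] * g) x * w x)"
      by (intro continuous_intros continuous_on_wgt)
    fix x assume "x \<in> {0..1} - {0, t, 1}"
    then have x: "0 < x" "x < 1" "x \<noteq> t" by auto
    have "w x * (\<alpha> / x - \<beta> / (1 - x) + \<gamma> / (x - t)) * poly ([:-t, 1:] * g) x
        = poly g x * w x * ((x - t) * (\<alpha> / x - \<beta> / (1 - x) + \<gamma> / (x - t)))"
      by (simp add: algebra_simps)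
    also have "\<dots> = G x - poly (pderiv ([:-t, 1:] * g)) x * w x"
      using x by (subst x_minus_t_mult_log_deriv) (auto simp: G_def algebra_simps)
    finally have E: "w x * (\<alpha> / x - \<beta> / (1 - x) + \<gamma> / (x - t)) * poly ([:-t, 1:] * g) x
        = G x - poly (pderiv ([:-t, 1:] * g)) x * w x" .
    have "((\<lambda>x. poly ([:-t, 1:] * g) x * w x) has_real_derivative G x) (at x)"
      using DERIV_mult[OF poly_DERIV[of "[:-t, 1:] * g" x] has_real_derivative_wgt[OF x]]
      by (rule DERIV_cong) (subst E, simp)
    then show "((\<lambda>x. poly ([:-t, 1:] * g) x * w x) has_vector_derivative G x) (at x)"
      by (simp add: has_real_derivative_iff_has_vector_derivative)
  qed auto
  then have "(G has_integral 0) {0..1}"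
    by (simp add: wgt_0 wgt_1)
  moreover have "(G has_integral (wint w (pderiv ([:-t, 1:] * g)) + (\<alpha> + \<beta> + \<gamma>) * wint w g
      - \<alpha> * t * integral {0..1} (\<lambda>x. poly g x * w x / x)
      - \<beta> * (1 - t) * integral {0..1} (\<lambda>x. poly g x * w x / (1 - x)))) {0..1}"
    unfolding G_def wint_def
    by (intro has_integral_diff has_integral_add has_integral_mult_right integrable_integral
        integrable_poly_mult_weight integrable_poly_wgt_div continuous_on_wgt)
  ultimately have "0 = wint w (pderiv ([:-t, 1:] * g)) + (\<alpha> + \<beta> + \<gamma>) * wint w g
      - \<alpha> * t * integral {0..1} (\<lambda>x. poly g x * w x / x)
      - \<beta> * (1 - t) * integral {0..1} (\<lambda>x. poly g x * w x / (1 - x))"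
    by (rule has_integral_unique)
  then show ?thesis by linarith
qed

end

locale jacobi_heaviside_ops = jacobi_heaviside_weight +
  fixes P :: "nat \<Rightarrow> real poly"
  assumes A_nonneg: "A \<ge> 0" and A_plus_B_nonneg: "A + B \<ge> 0"
    and weight_nonzero: "\<not> (A = 0 \<and> A + B = 0)"
    and monic_OPS_wgt: "monic_OPS w P"
begin

sublocale monic_orthogonal_family w P
  using continuous_on_wgt monic_OPS_wgt by unfold_locales

lemma hn_pos: "hn w P n > 0"
proof -
  have nonneg: "0 \<le> w x" if "x \<in> {0..1}" for x
    using that A_nonneg A_plus_B_nonneg by (simp add: wgt_def heaviside_def)
  have "P n \<noteq> 0"
    using coeff_P_self[of n] by auto
  have "\<exists>a b. 0 \<le> a \<and> a < b \<and> b \<le> 1 \<and> (\<forall>x \<in> {a<..<b}. 0 < w x)"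
  proof (cases "A > 0")
    case True
    then show ?thesis
      using t_pos t_less_1 by (intro exI[of _ 0] exI[of _ t]) (simp add: wgt_def heaviside_def)
  next
    case False
    then have "A + B > 0" using A_nonneg A_plus_B_nonneg weight_nonzero by auto
    then show ?thesis
      using t_pos t_less_1 by (intro exI[of _ t] exI[of _ 1]) (simp add: wgt_def heaviside_def)
  qed
  then show ?thesis
    using wint_square_pos[OF continuous_on_wgt nonneg _ _ _ _ \<open>P n \<noteq> 0\<close>]
    by (auto simp: hn_eq_wint)
qed

lemma rn_yn_relation:
  assumes "n \<ge> 1"
  shows "(1 - t) * rn \<beta> w P n + t * yn \<alpha> w P n = - subleading n - t * real n"
proof -
  obtain m where n: "n = Suc m" using assms by (cases n) auto
  from wint_pderiv_linear_mult[of "P n * P m"]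
  have "(- subleading n - t * real n) * hn w P m
      = \<alpha> * t * integral {0..1} (\<lambda>x. poly (P n * P m) x * w x / x)
        + \<beta> * (1 - t) * integral {0..1} (\<lambda>x. poly (P n * P m) x * w x / (1 - x))"
    unfolding n wint_pderiv_linear_mult_P_Suc_P wint_P_mult_P[OF Suc_n_not_n] by simp
  then show ?thesis
    using hn_pos[of m] by (simp add: rn_def yn_def n field_simps)
qed

lemma Rn_recurrence:
  "(1 - t) * Rn \<beta> w P j = (2 * real j + \<alpha> + \<beta> + \<gamma>) * subleading j
     - (2 * real j + 2 + \<alpha> + \<beta> + \<gamma>) * subleading (Suc j) - t * (2 * real j + 1 + \<alpha> + \<beta>) + \<beta>"
proof -
  define g where "g = [:0, 1:] * P j * P j"
  define Q where "Q = integral {0..1} (\<lambda>x. poly (P j * P j) x * w x / (1 - x))"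
  have "integral {0..1} (\<lambda>x. poly g x * w x / x) = integral {0..1} (\<lambda>x. poly (P j * P j) x * w x)"
    by (rule integral_cong) (auto simp: g_def wgt_0)
  then have div_x: "integral {0..1} (\<lambda>x. poly g x * w x / x) = hn w P j"
    by (simp add: hn_eq_wint wint_def)
  have "integral {0..1} (\<lambda>x. poly g x * w x / (1 - x))
      = integral {0..1} (\<lambda>x. poly (P j * P j) x * w x / (1 - x) - poly (P j * P j) x * w x)"
  proof (rule integral_cong)
    fix x :: real
    show "poly g x * w x / (1 - x) = poly (P j * P j) x * w x / (1 - x) - poly (P j * P j) x * w x"
    proof (cases "x = 1")
      case False
      then have "1 - x \<noteq> 0" by simp
      then show ?thesis by (simp add: g_def field_simps)
    qed (simp add: wgt_1)
  qed
  also have "\<dots> = Q - hn w P j"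
    unfolding Q_def hn_eq_wint wint_def
    by (intro integral_diff integrable_poly_wgt_div integrable_poly_mult_weight continuous_on_wgt)
  finally have div_1x: "integral {0..1} (\<lambda>x. poly g x * w x / (1 - x)) = Q - hn w P j" .
  have "(2 * real j * subleading j - t * (2 * real j + 1) - (2 * real j + 2) * subleading (Suc j)) * hn w P j
      + (\<alpha> + \<beta> + \<gamma>) * ((subleading j - subleading (Suc j)) * hn w P j)
      = \<alpha> * t * hn w P j + \<beta> * (1 - t) * (Q - hn w P j)"
    using wint_pderiv_linear_mult[of g]
    unfolding div_x div_1x unfolding g_def wint_pderiv_linear_mult_x_P_P wint_x_mult_P_P .
  then show ?thesis
    using hn_pos[of j] by (simp add: Rn_def Q_def power2_eq_square field_simps)
qed

lemma sum_Rn: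
  "(1 - t) * (\<Sum>j<n. Rn \<beta> w P j)
     = - (2 * real n + \<alpha> + \<beta> + \<gamma>) * subleading n + real n * \<beta> - t * (real n ^ 2 + real n * (\<alpha> + \<beta>))"
proof (induction n)
  case 0
  show ?case by (simp add: subleading_def)
next
  case (Suc n)
  have "(1 - t) * (\<Sum>j<Suc n. Rn \<beta> w P j) = (1 - t) * (\<Sum>j<n. Rn \<beta> w P j) + (1 - t) * Rn \<beta> w P n"
    by (simp add: distrib_left)
  then show ?case
    by (simp only: Suc.IH Rn_recurrence) (simp add: power2_eq_square algebra_simps)
qed

end

theorem mainTheorem5:
  fixes \<alpha> \<beta> \<gamma> A B t :: real and P :: "nat \<Rightarrow> real poly" and n :: nat
  assumes "\<alpha> > 0" and "\<beta> > 0" and "\<gamma> > 0"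
    and "A \<ge> 0" and "A + B \<ge> 0" and "\<not> (A = 0 \<and> A + B = 0)"
    and "0 < t" and "t < 1"
    and "monic_OPS (wgt \<alpha> \<beta> \<gamma> A B t) P"
    and "n \<ge> 1"
  shows "real n * \<beta> + real n * (real n + \<gamma>) * t
     - (2 * real n + \<alpha> + \<beta> + \<gamma>) * (t - 1) * rn \<beta> (wgt \<alpha> \<beta> \<gamma> A B t) P n
     + (2 * real n + \<alpha> + \<beta> + \<gamma>) * t * yn \<alpha> (wgt \<alpha> \<beta> \<gamma> A B t) P n
     + (t - 1) * (\<Sum>j<n. Rn \<beta> (wgt \<alpha> \<beta> \<gamma> A B t) P j) = 0"
proof -
  interpret jacobi_heaviside_ops \<alpha> \<beta> \<gamma> A B t P
    using assms by unfold_locales auto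
  define S where "S = 2 * real n + \<alpha> + \<beta> + \<gamma>"
  have "real n * \<beta> + real n * (real n + \<gamma>) * t - S * (t - 1) * rn \<beta> w P n + S * t * yn \<alpha> w P n
      + (t - 1) * (\<Sum>j<n. Rn \<beta> w P j)
      = real n * \<beta> + real n * (real n + \<gamma>) * t + S * ((1 - t) * rn \<beta> w P n + t * yn \<alpha> w P n)
        - (1 - t) * (\<Sum>j<n. Rn \<beta> w P j)"
    by (simp add: algebra_simps)
  also have "\<dots> = 0"
    unfolding rn_yn_relation[OF \<open>n \<ge> 1\<close>] sum_Rn S_def by (simp add: power2_eq_square algebra_simps)
  finally show ?thesis by (simp add: S_def)
qed

end
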